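(* Suppose no agent is faulty, the directed graph $G$ on $\{1,\dots,n\}$ is strongly connected, and every agent runs Failure-free BFL. Let $\lambda=\big(1-(1/n)^n\big)^{1/n}$, let $\theta\neq\theta^*$, and let $\psi_t^i(\theta,\theta^* )=\log\frac{\mu_t^i(\theta)}{\mu_t^i(\theta^* )}$. Then for each agent $i$ and each $t\ge1$, $$\mathbb{E}^*\big[\psi_t^i(\theta,\theta^* )\big]\le\frac{nC_0}{(1-\frac{1}{n^n})(1-\lambda)}\,t-\frac{C_1}{2n^n}\,t^2 .$$
   Context: Finite hypothesis set $\Theta=\{\theta_1,\dots,\theta_m\}$, true state $\theta^*$. Agent $i$ has finite signal space $\mathcal{S}_i$ and likelihoods $\ell_i(\cdot\mid\theta)$ with full support; in iteration $t$ it observes $s_t^i\sim\ell_i(\cdot\mid\theta^* )$, independently across agents and iterations; $\ell_i(s_{1,t}^i\mid\theta)=\prod_{r=1}^t\ell_i(s_r^i\mid\theta)$. $\mathbb{E}^*$ denotes expectation when signals are drawn under $\theta^*$. $\mathcal{I}_i$ is the set of incoming neighbors of $i$. Failure-free BFL: $\mu_0^i$ uniform on $\Theta$; in iteration $t$, agent $i$ receives $\mu_{t-1}^j$ from all $j\in\mathcal{I}_i$ and sets $\mu_t^i(\theta)\propto\ell_i(s_{1,t}^i\mid\theta)\prod_{j\in\mathcal{I}_i\cup\{i\}}\mu_{t-1}^j(\theta)^{1/(|\mathcal{I}_i|+1)}$, normalized over $\Theta$. Constants: $-C_0=\min_{i}\min_{\theta_1\ne\theta_2\in\Theta}\min_{w\in\mathcal{S}_i}\log\frac{\ell_i(w\mid\theta_1)}{\ell_i(w\mid\theta_2)}$,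 and $C_1=\min_{\theta,\theta'\in\Theta,\ \theta\neq\theta'}\sum_{i=1}^nD(\ell_i(\cdot\mid\theta')\|\ell_i(\cdot\mid\theta))$, where $D$ is the Kullback–Leibler divergence $D(p\|q)=\sum_wp(w)\log\frac{p(w)}{q(w)}$. *)

theory Defs
  imports Complex_Main "HOL-Library.FuncSet"
begin

text \<open>Agents are 1..n. A signal history is a function assigning to (agent i, iteration r)
the signal observed by agent i in iteration r.\<close>

definition agents :: "nat \<Rightarrow> nat set" where
  "agents n = {1..n}"

text \<open>Incoming neighbours of agent i in the digraph with edge set E (edge (j,i): j \<rightarrow> i).\<close>
definition incoming :: "nat \<Rightarrow> (nat \<times> nat) set \<Rightarrow> nat \<Rightarrow> nat set" where
  "incoming n E i = {j \<in> agents n. (j, i) \<in> E \<and> j \<noteq> i}"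

definition strongly_connected :: "nat \<Rightarrow> (nat \<times> nat) set \<Rightarrow> bool" where
  "strongly_connected n E \<longleftrightarrow> (\<forall>i\<in>agents n. \<forall>j\<in>agents n. (i, j) \<in> E\<^sup>*)"

definition cum_lik ::
  "(nat \<Rightarrow> 's \<Rightarrow> 'h \<Rightarrow> real) \<Rightarrow> (nat \<times> nat \<Rightarrow> 's) \<Rightarrow> nat \<Rightarrow> nat \<Rightarrow> 'h \<Rightarrow> real" where
  "cum_lik L \<omega> t i \<theta> = (\<Prod>r\<in>{1..t}. L i (\<omega> (i, r)) \<theta>)"

primrec bfl_belief ::
  "nat \<Rightarrow> (nat \<times> nat) set \<Rightarrow> 'h set \<Rightarrow> (nat \<Rightarrow> 's \<Rightarrow> 'h \<Rightarrow> real) \<Rightarrow> (nat \<times> nat \<Rightarrow> 's)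
    \<Rightarrow> nat \<Rightarrow> nat \<Rightarrow> 'h \<Rightarrow> real" where
  "bfl_belief n E \<Theta> L \<omega> 0 = (\<lambda>i \<theta>. 1 / real (card \<Theta>))"
| "bfl_belief n E \<Theta> L \<omega> (Suc t) =
     (let b = bfl_belief n E \<Theta> L \<omega> t;
          u = (\<lambda>i \<theta>. cum_lik L \<omega> (Suc t) i \<theta> *
                 (\<Prod>j\<in>insert i (incoming n E i).
                     b j \<theta> powr (1 / (real (card (incoming n E i)) + 1))))
      in (\<lambda>i \<theta>. u i \<theta> / (\<Sum>\<theta>'\<in>\<Theta>. u i \<theta>')))"

text \<open>Expectation under theta*: signals independent across agents and iterations 1..t,
  s^i_r ~ l_i(. | theta*). X depends on the signals of iterations 1..t only.\<close>
definition expect_star ::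
  "nat \<Rightarrow> (nat \<Rightarrow> 's set) \<Rightarrow> (nat \<Rightarrow> 's \<Rightarrow> 'h \<Rightarrow> real) \<Rightarrow> 'h \<Rightarrow> nat
    \<Rightarrow> ((nat \<times> nat \<Rightarrow> 's) \<Rightarrow> real) \<Rightarrow> real" where
  "expect_star n S L \<theta>s t X =
     (\<Sum>\<omega>\<in>PiE (agents n \<times> {1..t}) (\<lambda>p. S (fst p)).
        (\<Prod>p\<in>agents n \<times> {1..t}. L (fst p) (\<omega> p) \<theta>s) * X \<omega>)"

definition C0 :: "nat \<Rightarrow> (nat \<Rightarrow> 's set) \<Rightarrow> (nat \<Rightarrow> 's \<Rightarrow> 'h \<Rightarrow> real) \<Rightarrow> 'h set \<Rightarrow> real" where
  "C0 n S L \<Theta> = - Min {ln (L i w \<theta>1 / L i w \<theta>2) | i w \<theta>1 \<theta>2.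
       i \<in> agents n \<and> \<theta>1 \<in> \<Theta> \<and> \<theta>2 \<in> \<Theta> \<and> \<theta>1 \<noteq> \<theta>2 \<and> w \<in> S i}"

definition KL :: "'s set \<Rightarrow> ('s \<Rightarrow> real) \<Rightarrow> ('s \<Rightarrow> real) \<Rightarrow> real" where
  "KL A p q = (\<Sum>w\<in>A. p w * ln (p w / q w))"

definition C1 :: "nat \<Rightarrow> (nat \<Rightarrow> 's set) \<Rightarrow> (nat \<Rightarrow> 's \<Rightarrow> 'h \<Rightarrow> real) \<Rightarrow> 'h set \<Rightarrow> real" where
  "C1 n S L \<Theta> = Min {(\<Sum>i\<in>agents n. KL (S i) (\<lambda>w. L i w \<theta>') (\<lambda>w. L i w \<theta>)) | \<theta> \<theta>'.
       \<theta> \<in> \<Theta> \<and> \<theta>' \<in> \<Theta> \<and> \<theta> \<noteq> \<theta>'}"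

end

theory Submission
  imports Defs
begin

(* Taking logarithms turns the geometric averaging of BFL into a linear averaging: with A the
  row-stochastic weight matrix of the graph and D j the KL divergence between the signal
  distributions of agent j under theta* and theta, the expected log-ratio e_s satisfies
  e_(s+1) = A e_s - (s + 1) D, hence e_t = - (SUM k<t. (t - k) A^k D).  In a strongly connected
  graph with self-loops every entry of A^k is at least n^-n once k >= n, and SUM j. D j >= C1,
  so e_t <= - n^-n C1 (SUM n<=k<t. t - k), which is quadratic in t; the remaining linear term
  is controlled by D j <= C0. *)

lemma rtrancl_imp_relpow_le_card:
  assumes "finite V" and "R \<subseteq> V \<times> V" and "(x, y) \<in> R\<^sup>*"
  shows "\<exists>m\<le>card V. (x, y) \<in> R ^^ m"
proof -
  have "\<exists>m'\<le>card V. (x, y) \<in> R ^^ m'" if "(x, y) \<in> R ^^ m" for m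
    using that
  proof (induction m rule: less_induct)
    case (less m)
    show ?case
    proof (cases "m \<le> card V")
      case True
      then show ?thesis using less.prems by blast
    next
      case False
      obtain f where f: "f 0 = x" "f m = y" "\<forall>k<m. (f k, f (Suc k)) \<in> R"
        using less.prems by (auto simp: relpow_fun_conv)
      have "f ` {..<m} \<subseteq> V"
        using f(3) assms(2) by auto
      then have "\<not> inj_on f {..<m}"
        using False card_inj_on_le[OF _ _ assms(1), of f "{..<m}"] by auto
      then obtain a b where ab: "a < b" "b < m" "f a = f b"
        unfolding inj_on_def by (metis lessThan_iff linorder_neqE_nat)
      have "(x, f a) \<in> R ^^ a"
        unfolding relpow_fun_conv using f ab by (intro exI[of _ f]) auto
      moreover have "(f b, y) \<in> R ^^ (m - b)"
        unfolding relpow_fun_conv using f ab by (intro exI[of _ "\<lambda>k. f (k + b)"]) auto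
      ultimately have "(x, y) \<in> R ^^ (a + (m - b))"
        using ab(3) by (auto simp: relpow_add)
      then show ?thesis
        using less.IH[of "a + (m - b)"] ab by simp
    qed
  qed
  then show ?thesis
    using assms(3) rtrancl_power by blast
qed

primrec mat_pow :: "'a set \<Rightarrow> ('a \<Rightarrow> 'a \<Rightarrow> real) \<Rightarrow> nat \<Rightarrow> 'a \<Rightarrow> 'a \<Rightarrow> real" where
  "mat_pow V a 0 i j = (if i = j then 1 else 0)"
| "mat_pow V a (Suc k) i j = (\<Sum>l\<in>V. a i l * mat_pow V a k l j)"

lemma mat_pow_nonneg:
  assumes "\<And>i l. a i l \<ge> 0"
  shows "mat_pow V a k i j \<ge> 0"
  using assms by (induction k arbitrary: i) (auto intro!: sum_nonneg)

lemma mat_pow_mult_vec_Suc: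
  "(\<Sum>m\<in>V. mat_pow V a (Suc k) i m * D m) = (\<Sum>l\<in>V. a i l * (\<Sum>m\<in>V. mat_pow V a k l m * D m))"
proof -
  have "(\<Sum>m\<in>V. mat_pow V a (Suc k) i m * D m) = (\<Sum>m\<in>V. \<Sum>l\<in>V. a i l * mat_pow V a k l m * D m)"
    by (simp add: sum_distrib_right)
  also have "\<dots> = (\<Sum>l\<in>V. \<Sum>m\<in>V. a i l * mat_pow V a k l m * D m)"
    by (rule sum.swap)
  finally show ?thesis
    by (simp add: sum_distrib_left mult.assoc)
qed

lemma mat_pow_ge_walk:
  assumes nonneg: "\<And>i l. a i l \<ge> 0"
    and diag: "\<And>i. i \<in> V \<Longrightarrow> a i i \<ge> \<delta>"
    and edge: "\<And>l i. (l, i) \<in> R \<Longrightarrow> a i l \<ge> \<delta>"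
    and "finite V" and "R \<subseteq> V \<times> V" and "\<delta> \<ge> 0"
  shows "(j, i) \<in> R ^^ m \<Longrightarrow> m \<le> k \<Longrightarrow> i \<in> V \<Longrightarrow> mat_pow V a k i j \<ge> \<delta> ^ k"
proof (induction k arbitrary: i m)
  case 0
  then show ?case by simp
next
  case (Suc k)
  obtain l where l: "l \<in> V" "a i l \<ge> \<delta>" "(j, l) \<in> R ^^ (m - 1)" "m - 1 \<le> k"
  proof (cases m)
    case 0
    then show ?thesis
      using that[of i] diag Suc.prems by auto
  next
    case (Suc m')
    then obtain l where "(j, l) \<in> R ^^ m'" "(l, i) \<in> R"
      using Suc.prems(1) by (auto elim: relpow_Suc_E)
    then show ?thesis
      using that[of l] edge assms(5) Suc Suc.prems(2) by auto
  qed
  have "\<delta> * \<delta> ^ k \<le> a i l * mat_pow V a k l j"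
    using Suc.IH[OF l(3,4,1)] l(2) assms(6) by (intro mult_mono) auto
  also have "\<dots> \<le> (\<Sum>l\<in>V. a i l * mat_pow V a k l j)"
    by (rule member_le_sum) (use l(1) assms(4) in \<open>auto intro: mult_nonneg_nonneg nonneg mat_pow_nonneg\<close>)
  finally show ?case by simp
qed

lemma mat_pow_lower_bound_persists:
  assumes nonneg: "\<And>i l. a i l \<ge> 0"
    and stochastic: "\<And>i. i \<in> V \<Longrightarrow> (\<Sum>l\<in>V. a i l) = 1"
    and bound: "\<And>l. l \<in> V \<Longrightarrow> mat_pow V a N l j \<ge> c"
  shows "i \<in> V \<Longrightarrow> mat_pow V a (k + N) i j \<ge> c"
proof (induction k arbitrary: i)
  case 0
  then show ?case using bound by simp
next
  case (Suc k)
  have "c = (\<Sum>l\<in>V. a i l * c)"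
    using stochastic[OF Suc.prems] by (simp add: sum_distrib_right[symmetric])
  also have "\<dots> \<le> (\<Sum>l\<in>V. a i l * mat_pow V a (k + N) l j)"
    by (rule sum_mono) (auto intro: mult_left_mono Suc.IH nonneg)
  finally show ?case by simp
qed

lemma mat_pow_ge_strongly_connected:
  assumes nonneg: "\<And>i l. a i l \<ge> 0"
    and stochastic: "\<And>i. i \<in> V \<Longrightarrow> (\<Sum>l\<in>V. a i l) = 1"
    and diag: "\<And>i. i \<in> V \<Longrightarrow> a i i \<ge> \<delta>"
    and edge: "\<And>l i. (l, i) \<in> R \<Longrightarrow> a i l \<ge> \<delta>"
    and "\<delta> \<ge> 0" and "finite V" and "R \<subseteq> V \<times> V"
    and connected: "\<forall>i\<in>V. \<forall>j\<in>V. (j, i) \<in> R\<^sup>*"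
    and "card V \<le> k" and "i \<in> V" and "j \<in> V"
  shows "mat_pow V a k i j \<ge> \<delta> ^ card V"
proof -
  have "mat_pow V a (card V) l j \<ge> \<delta> ^ card V" if "l \<in> V" for l
  proof -
    have "(j, l) \<in> R\<^sup>*"
      using connected that assms(11) by blast
    then obtain m where "m \<le> card V" "(j, l) \<in> R ^^ m"
      using rtrancl_imp_relpow_le_card[OF assms(6,7)] by blast
    then show ?thesis
      using mat_pow_ge_walk[where a = a, OF nonneg diag edge assms(6,7,5)] that by simp
  qed
  then show ?thesis
    using mat_pow_lower_bound_persists[where a = a and N = "card V" and k = "k - card V",
        OF nonneg stochastic _ assms(10)] assms(9) by simp
qed

lemma linear_recursion_closed_form:
  fixes e :: "nat \<Rightarrow> 'a \<Rightarrow> real"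
  assumes "finite V"
    and init: "\<And>j. j \<in> V \<Longrightarrow> e 0 j = 0"
    and step: "\<And>s j. s < t \<Longrightarrow> j \<in> V \<Longrightarrow>
       e (Suc s) j = (\<Sum>l\<in>V. a j l * e s l) - real (Suc s) * D j"
  shows "s \<le> t \<Longrightarrow> j \<in> V \<Longrightarrow>
    e s j = - (\<Sum>k<s. (real s - real k) * (\<Sum>m\<in>V. mat_pow V a k j m * D m))"
proof (induction s arbitrary: j)
  case 0
  then show ?case using init by simp
next
  case (Suc s)
  let ?f = "\<lambda>k j. \<Sum>m\<in>V. mat_pow V a k j m * D m"
  have "(\<Sum>l\<in>V. a j l * e s l) = - (\<Sum>l\<in>V. a j l * (\<Sum>k<s. (real s - real k) * ?f k l))"
    using Suc by (simp add: sum_negf)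
  also have "\<dots> = - (\<Sum>k<s. (real s - real k) * (\<Sum>l\<in>V. a j l * ?f k l))"
    unfolding sum_distrib_left by (subst sum.swap) (simp add: mult.left_commute)
  also have "\<dots> = - (\<Sum>k<s. (real s - real k) * ?f (Suc k) j)"
    by (simp only: mat_pow_mult_vec_Suc)
  finally have "(\<Sum>l\<in>V. a j l * e s l) = - (\<Sum>k<s. (real s - real k) * ?f (Suc k) j)" .
  moreover have "?f 0 j = D j"
  proof -
    have "?f 0 j = (\<Sum>m\<in>V. if j = m then D m else 0)"
      by (rule sum.cong) auto
    then show ?thesis
      using Suc.prems assms(1) by simp
  qed
  ultimately have "e (Suc s) j = - (\<Sum>k<s. (real s - real k) * ?f (Suc k) j) - real (Suc s) * ?f 0 j"
    using step[of s j] Suc.prems by simp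
  then show ?case
    by (simp add: sum.lessThan_Suc_shift del: sum.lessThan_Suc)
qed

lemma sum_atLeastLessThan_diff_ge:
  "2 * (\<Sum>k\<in>{N..<t}. real t - real k) \<ge> (real t)\<^sup>2 - (2 * real N - 1) * real t"
proof (induction t)
  case 0
  then show ?case by simp
next
  case (Suc t)
  have "(\<Sum>k\<in>{N..<Suc t}. real t - real k) = (\<Sum>k\<in>{N..<t}. real t - real k)"
    by (cases "N \<le> t") (simp_all add: sum.atLeastLessThan_Suc)
  moreover have "(\<Sum>k\<in>{N..<Suc t}. real (Suc t) - real k)
      = (\<Sum>k\<in>{N..<Suc t}. (real t - real k) + 1)"
    by (rule sum.cong) auto
  moreover have "\<dots> = (\<Sum>k\<in>{N..<Suc t}. real t - real k) + real (card {N..<Suc t})"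
    unfolding sum.distrib by simp
  moreover have "real (card {N..<Suc t}) \<ge> real (Suc t) - real N"
    by simp
  ultimately show ?case
    using Suc.IH by (simp add: power2_eq_square algebra_simps)
qed

lemma KL_nonneg:
  assumes "finite A" "\<And>w. w \<in> A \<Longrightarrow> p w > 0" "\<And>w. w \<in> A \<Longrightarrow> q w > 0"
    and "sum p A = 1" "sum q A = 1"
  shows "KL A p q \<ge> 0"
proof -
  have "p w - q w \<le> p w * ln (p w / q w)" if "w \<in> A" for w
  proof -
    have "ln (q w / p w) \<le> q w / p w - 1"
      using that assms by (intro ln_le_minus_one) auto
    then have "p w * (1 - q w / p w) \<le> p w * ln (p w / q w)"
      using that assms by (intro mult_left_mono) (auto simp: ln_div less_imp_le)
    moreover have "p w * (1 - q w / p w) = p w - q w"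
      using assms(2)[OF that] by (simp add: field_simps)
    ultimately show ?thesis
      by simp
  qed
  then have "(\<Sum>w\<in>A. p w - q w) \<le> KL A p q"
    unfolding KL_def by (rule sum_mono)
  then show ?thesis
    using assms by (simp add: sum_subtractf)
qed

(* In log space a BFL step averages the log-beliefs of the closed in-neighbourhood with
  these weights, so they form the matrix A of the linear recursion. *)
definition bfl_weight :: "nat \<Rightarrow> (nat \<times> nat) set \<Rightarrow> nat \<Rightarrow> nat \<Rightarrow> real" where
  "bfl_weight n E i l =
     (if l \<in> insert i (incoming n E i) then 1 / (real (card (incoming n E i)) + 1) else 0)"

lemma finite_agents [simp]: "finite (agents n)"
  by (simp add: agents_def)

lemma card_agents [simp]: "card (agents n) = n"
  by (simp add: agents_def)

lemma incoming_subset: "incoming n E i \<subseteq> agents n - {i}"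
  unfolding incoming_def by auto

lemma finite_incoming [simp]: "finite (incoming n E i)"
  by (rule finite_subset[OF incoming_subset]) simp

lemma neighbourhood_subset: "i \<in> agents n \<Longrightarrow> insert i (incoming n E i) \<subseteq> agents n"
  using incoming_subset by blast

lemma card_incoming_less:
  assumes "i \<in> agents n"
  shows "real (card (incoming n E i)) + 1 \<le> real n"
proof -
  have "card (incoming n E i) \<le> card (agents n - {i})"
    by (intro card_mono) (auto simp: incoming_subset)
  then show ?thesis
    using assms by (cases n) (auto simp: agents_def)
qed

lemma bfl_weight_nonneg: "bfl_weight n E i l \<ge> 0"
  by (simp add: bfl_weight_def)

lemma bfl_weight_ge:
  assumes "i \<in> agents n" and "l \<in> insert i (incoming n E i)"
  shows "bfl_weight n E i l \<ge> 1 / real n"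
  using card_incoming_less[OF assms(1)] assms(2) by (simp add: bfl_weight_def frac_le)

lemma sum_bfl_weight:
  assumes "i \<in> agents n"
  shows "(\<Sum>l\<in>agents n. bfl_weight n E i l * X l)
       = (\<Sum>k\<in>insert i (incoming n E i). 1 / (real (card (incoming n E i)) + 1) * X k)"
proof -
  have "(\<Sum>l\<in>agents n. bfl_weight n E i l * X l)
      = (\<Sum>l\<in>agents n. if l \<in> insert i (incoming n E i)
                         then 1 / (real (card (incoming n E i)) + 1) * X l else 0)"
    unfolding bfl_weight_def by (rule sum.cong) auto
  also have "\<dots> = (\<Sum>k\<in>agents n \<inter> insert i (incoming n E i).
                      1 / (real (card (incoming n E i)) + 1) * X k)"
    by (rule sum.inter_restrict[symmetric]) simp
  also have "agents n \<inter> insert i (incoming n E i) = insert i (incoming n E i)"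
    using neighbourhood_subset[OF assms] by blast
  finally show ?thesis .
qed

lemma bfl_weight_row_sum:
  assumes "i \<in> agents n"
  shows "(\<Sum>l\<in>agents n. bfl_weight n E i l) = 1"
proof -
  have "card (insert i (incoming n E i)) = card (incoming n E i) + 1"
    using incoming_subset by (auto simp: card_insert_if)
  then show ?thesis
    using sum_bfl_weight[OF assms, of E "\<lambda>_. 1"] by simp
qed

lemma mat_pow_bfl_weight_ge:
  assumes "E \<subseteq> agents n \<times> agents n" and "strongly_connected n E"
    and "n \<le> k" and "i \<in> agents n" and "j \<in> agents n"
  shows "mat_pow (agents n) (bfl_weight n E) k i j \<ge> (1 / real n) ^ n"
proof -
  have "bfl_weight n E i l \<ge> 1 / real n" if "(l, i) \<in> E" for l i
    using that assms(1) by (intro bfl_weight_ge) (auto simp: incoming_def)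
  then show ?thesis
    using mat_pow_ge_strongly_connected[where a = "bfl_weight n E" and R = E,
        OF bfl_weight_nonneg bfl_weight_row_sum bfl_weight_ge]
      assms by (auto simp: strongly_connected_def)
qed

abbreviation signal_histories :: "nat \<Rightarrow> (nat \<Rightarrow> 's set) \<Rightarrow> nat \<Rightarrow> (nat \<times> nat \<Rightarrow> 's) set" where
  "signal_histories n S t \<equiv> PiE (agents n \<times> {1..t}) (\<lambda>p. S (fst p))"

lemma signal_histories_mem:
  "\<omega> \<in> signal_histories n S t \<Longrightarrow> j \<in> agents n \<Longrightarrow> r \<in> {1..t} \<Longrightarrow> \<omega> (j, r) \<in> S j"
  by (drule PiE_mem[of _ _ _ "(j, r)"]) auto

lemma expect_star_cong:
  "(\<And>\<omega>. \<omega> \<in> signal_histories n S t \<Longrightarrow> X \<omega> = Y \<omega>) \<Longrightarrow>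
   expect_star n S L \<theta>s t X = expect_star n S L \<theta>s t Y"
  unfolding expect_star_def by (rule sum.cong) auto

lemma expect_star_add:
  "expect_star n S L \<theta>s t (\<lambda>\<omega>. X \<omega> + Y \<omega>) = expect_star n S L \<theta>s t X + expect_star n S L \<theta>s t Y"
  unfolding expect_star_def by (simp add: distrib_left sum.distrib)

lemma expect_star_cmult:
  "expect_star n S L \<theta>s t (\<lambda>\<omega>. c * X \<omega>) = c * expect_star n S L \<theta>s t X"
  unfolding expect_star_def by (simp add: sum_distrib_left mult.left_commute)

lemma expect_star_sum:
  "expect_star n S L \<theta>s t (\<lambda>\<omega>. \<Sum>r\<in>R. X r \<omega>) = (\<Sum>r\<in>R. expect_star n S L \<theta>s t (X r))"
  unfolding expect_star_def by (simp add: sum_distrib_left sum.swap[of _ R])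

locale bfl_model =
  fixes n :: nat and E :: "(nat \<times> nat) set" and \<Theta> :: "'h set"
    and S :: "nat \<Rightarrow> 's set" and L :: "nat \<Rightarrow> 's \<Rightarrow> 'h \<Rightarrow> real"
  assumes fin_Theta: "finite \<Theta>"
    and fin_S: "\<forall>j\<in>agents n. finite (S j)"
    and lik_pos: "\<forall>j\<in>agents n. \<forall>w\<in>S j. \<forall>\<eta>\<in>\<Theta>. L j w \<eta> > 0"
    and lik_sum: "\<forall>j\<in>agents n. \<forall>\<eta>\<in>\<Theta>. (\<Sum>w\<in>S j. L j w \<eta>) = 1"
begin

(* Independence: the weight of a history factorises over the pairs (agent, iteration), and
  every factor except the one of the observed pair sums to 1. *)
lemma expect_star_signal:
  assumes "\<theta>s \<in> \<Theta>" and p: "(j, r) \<in> agents n \<times> {1..t}"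
  shows "expect_star n S L \<theta>s t (\<lambda>\<omega>. g (\<omega> (j, r))) = (\<Sum>w\<in>S j. L j w \<theta>s * g w)"
proof -
  let ?I = "agents n \<times> {1..t}"
  define F where "F p w = (if p = (j, r) then L (fst p) w \<theta>s * g w else L (fst p) w \<theta>s)" for p w
  have fin: "finite ?I" by simp
  have "(\<Prod>p\<in>?I. L (fst p) (\<omega> p) \<theta>s) * g (\<omega> (j, r)) = (\<Prod>p\<in>?I. F p (\<omega> p))" for \<omega>
  proof -
    have "(\<Prod>p\<in>?I - {(j, r)}. F p (\<omega> p)) = (\<Prod>p\<in>?I - {(j, r)}. L (fst p) (\<omega> p) \<theta>s)"
      by (rule prod.cong) (auto simp: F_def)
    then show ?thesis
      unfolding prod.remove[OF fin p] by (simp add: F_def)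
  qed
  then have "expect_star n S L \<theta>s t (\<lambda>\<omega>. g (\<omega> (j, r)))
      = (\<Sum>\<omega>\<in>signal_histories n S t. \<Prod>p\<in>?I. F p (\<omega> p))"
    unfolding expect_star_def by simp
  also have "\<dots> = (\<Prod>p\<in>?I. \<Sum>w\<in>S (fst p). F p w)"
    by (rule prod_sum_PiE[symmetric]) (use fin_S in auto)
  also have "\<dots> = (\<Sum>w\<in>S j. F (j, r) w) * (\<Prod>p\<in>?I - {(j, r)}. \<Sum>w\<in>S (fst p). F p w)"
    using prod.remove[OF fin p, of "\<lambda>p. \<Sum>w\<in>S (fst p). F p w"] by simp
  also have "(\<Prod>p\<in>?I - {(j, r)}. \<Sum>w\<in>S (fst p). F p w) = 1"
    by (rule prod.neutral) (use lik_sum assms(1) in \<open>auto simp: F_def\<close>)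
  finally show ?thesis
    by (simp add: F_def)
qed

lemma signal_lik_pos:
  "\<omega> \<in> signal_histories n S t \<Longrightarrow> j \<in> agents n \<Longrightarrow> r \<in> {1..t} \<Longrightarrow> \<eta> \<in> \<Theta> \<Longrightarrow>
   L j (\<omega> (j, r)) \<eta> > 0"
  using lik_pos signal_histories_mem by blast

definition bfl_unnormalised :: "(nat \<times> nat \<Rightarrow> 's) \<Rightarrow> nat \<Rightarrow> nat \<Rightarrow> 'h \<Rightarrow> real" where
  "bfl_unnormalised \<omega> s j \<eta> = cum_lik L \<omega> (Suc s) j \<eta> *
     (\<Prod>k\<in>insert j (incoming n E j).
        bfl_belief n E \<Theta> L \<omega> s k \<eta> powr (1 / (real (card (incoming n E j)) + 1)))"

lemma bfl_belief_Suc: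
  "bfl_belief n E \<Theta> L \<omega> (Suc s) j \<eta> = bfl_unnormalised \<omega> s j \<eta> / (\<Sum>\<eta>'\<in>\<Theta>. bfl_unnormalised \<omega> s j \<eta>')"
  by (simp add: bfl_unnormalised_def Let_def)

lemma bfl_unnormalised_pos:
  assumes "\<omega> \<in> signal_histories n S t" and "s < t" and "j \<in> agents n" and "\<eta> \<in> \<Theta>"
    and "\<And>k. k \<in> insert j (incoming n E j) \<Longrightarrow> bfl_belief n E \<Theta> L \<omega> s k \<eta> > 0"
  shows "bfl_unnormalised \<omega> s j \<eta> > 0"
proof -
  have "cum_lik L \<omega> (Suc s) j \<eta> > 0"
    unfolding cum_lik_def using signal_lik_pos[OF assms(1,3) _ assms(4)] assms(2)
    by (intro prod_pos) auto
  moreover have "bfl_belief n E \<Theta> L \<omega> s k \<eta> \<noteq> 0" if "k \<in> insert j (incoming n E j)" for k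
    using assms(5)[OF that] by simp
  ultimately show ?thesis
    unfolding bfl_unnormalised_def by (intro mult_pos_pos prod_pos) auto
qed

lemma bfl_belief_pos:
  assumes "\<Theta> \<noteq> {}" and \<omega>: "\<omega> \<in> signal_histories n S t"
  shows "s \<le> t \<Longrightarrow> j \<in> agents n \<Longrightarrow> \<eta> \<in> \<Theta> \<Longrightarrow> bfl_belief n E \<Theta> L \<omega> s j \<eta> > 0"
proof (induction s arbitrary: j \<eta>)
  case 0
  then show ?case
    using fin_Theta assms(1) by (simp add: card_gt_0_iff)
next
  case (Suc s)
  have "bfl_unnormalised \<omega> s j \<eta>' > 0" if "\<eta>' \<in> \<Theta>" for \<eta>'
    using Suc neighbourhood_subset[OF Suc.prems(2)] that by (intro bfl_unnormalised_pos[OF \<omega>]) auto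
  then show ?case
    unfolding bfl_belief_Suc using Suc.prems fin_Theta by (auto intro!: divide_pos_pos sum_pos)
qed

lemma ln_bfl_unnormalised:
  assumes \<omega>: "\<omega> \<in> signal_histories n S t" and "s < t" and j: "j \<in> agents n" and \<eta>: "\<eta> \<in> \<Theta>"
  shows "ln (bfl_unnormalised \<omega> s j \<eta>) = (\<Sum>r\<in>{1..Suc s}. ln (L j (\<omega> (j, r)) \<eta>))
      + (\<Sum>l\<in>agents n. bfl_weight n E j l * ln (bfl_belief n E \<Theta> L \<omega> s l \<eta>))"
proof -
  define w where "w = 1 / (real (card (incoming n E j)) + 1)"
  define K where "K = insert j (incoming n E j)"
  have K: "K \<subseteq> agents n" "finite K"
    using neighbourhood_subset[OF j] unfolding K_def by auto
  have b_pos: "bfl_belief n E \<Theta> L \<omega> s k \<eta> > 0" if "k \<in> K" for k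
    using \<open>s < t\<close> K that \<eta> by (intro bfl_belief_pos[OF _ \<omega>]) auto
  have L_pos: "L j (\<omega> (j, r)) \<eta> > 0" if "r \<in> {1..Suc s}" for r
    using signal_lik_pos[OF \<omega> j] \<open>s < t\<close> that \<eta> by auto
  have "ln (bfl_unnormalised \<omega> s j \<eta>)
      = ln (cum_lik L \<omega> (Suc s) j \<eta>) + ln (\<Prod>k\<in>K. bfl_belief n E \<Theta> L \<omega> s k \<eta> powr w)"
    unfolding bfl_unnormalised_def cum_lik_def K_def[symmetric] w_def[symmetric]
    using L_pos b_pos by (intro ln_mult_pos prod_pos) fastforce+
  also have "ln (cum_lik L \<omega> (Suc s) j \<eta>) = (\<Sum>r\<in>{1..Suc s}. ln (L j (\<omega> (j, r)) \<eta>))"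
    unfolding cum_lik_def by (rule ln_prod) (use L_pos in force)+
  also have "ln (\<Prod>k\<in>K. bfl_belief n E \<Theta> L \<omega> s k \<eta> powr w)
      = (\<Sum>k\<in>K. w * ln (bfl_belief n E \<Theta> L \<omega> s k \<eta>))"
    using K b_pos by (subst ln_prod) force+
  finally show ?thesis
    unfolding sum_bfl_weight[OF j] K_def w_def .
qed

lemma bfl_log_ratio_Suc:
  assumes \<omega>: "\<omega> \<in> signal_histories n S t"
    and \<theta>: "\<theta> \<in> \<Theta>" and \<theta>s: "\<theta>s \<in> \<Theta>" and "s < t" and j: "j \<in> agents n"
  shows "ln (bfl_belief n E \<Theta> L \<omega> (Suc s) j \<theta> / bfl_belief n E \<Theta> L \<omega> (Suc s) j \<theta>s)
       = (\<Sum>r\<in>{1..Suc s}. ln (L j (\<omega> (j, r)) \<theta> / L j (\<omega> (j, r)) \<theta>s))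
         + (\<Sum>l\<in>agents n. bfl_weight n E j l *
              ln (bfl_belief n E \<Theta> L \<omega> s l \<theta> / bfl_belief n E \<Theta> L \<omega> s l \<theta>s))"
proof -
  let ?u = "bfl_unnormalised \<omega> s j"
  have b_pos: "bfl_belief n E \<Theta> L \<omega> s l \<eta> > 0" if "l \<in> agents n" "\<eta> \<in> \<Theta>" for l \<eta>
    using \<open>s < t\<close> that by (intro bfl_belief_pos[OF _ \<omega>]) auto
  have L_pos: "L j (\<omega> (j, r)) \<eta> > 0" if "r \<in> {1..Suc s}" "\<eta> \<in> \<Theta>" for r \<eta>
    using signal_lik_pos[OF \<omega> j] \<open>s < t\<close> that by auto
  have u_pos: "?u \<eta> > 0" if "\<eta> \<in> \<Theta>" for \<eta>
    using that j \<open>s < t\<close> neighbourhood_subset[OF j] b_pos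
    by (intro bfl_unnormalised_pos[OF \<omega>]) auto
  have "(\<Sum>\<eta>\<in>\<Theta>. ?u \<eta>) > 0"
    using u_pos fin_Theta \<theta> by (intro sum_pos) auto
  then have "bfl_belief n E \<Theta> L \<omega> (Suc s) j \<theta> / bfl_belief n E \<Theta> L \<omega> (Suc s) j \<theta>s
      = ?u \<theta> / ?u \<theta>s"
    unfolding bfl_belief_Suc by simp
  then have "ln (bfl_belief n E \<Theta> L \<omega> (Suc s) j \<theta> / bfl_belief n E \<Theta> L \<omega> (Suc s) j \<theta>s)
      = ln (?u \<theta>) - ln (?u \<theta>s)"
    using u_pos[OF \<theta>] u_pos[OF \<theta>s] by (simp add: ln_div)
  also have "\<dots> = (\<Sum>r\<in>{1..Suc s}. ln (L j (\<omega> (j, r)) \<theta>) - ln (L j (\<omega> (j, r)) \<theta>s))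
      + (\<Sum>l\<in>agents n. bfl_weight n E j l *
           (ln (bfl_belief n E \<Theta> L \<omega> s l \<theta>) - ln (bfl_belief n E \<Theta> L \<omega> s l \<theta>s)))"
    unfolding ln_bfl_unnormalised[OF \<omega> \<open>s < t\<close> j \<theta>] ln_bfl_unnormalised[OF \<omega> \<open>s < t\<close> j \<theta>s]
    by (simp add: sum_subtractf right_diff_distrib)
  also have "\<dots> = (\<Sum>r\<in>{1..Suc s}. ln (L j (\<omega> (j, r)) \<theta> / L j (\<omega> (j, r)) \<theta>s))
      + (\<Sum>l\<in>agents n. bfl_weight n E j l *
           ln (bfl_belief n E \<Theta> L \<omega> s l \<theta> / bfl_belief n E \<Theta> L \<omega> s l \<theta>s))"
    using \<theta> \<theta>s by (intro arg_cong2[where f = "(+)"] sum.cong)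
      (simp_all add: ln_div L_pos b_pos dual_order.strict_implies_not_eq)
  finally show ?thesis .
qed

definition agent_KL :: "'h \<Rightarrow> 'h \<Rightarrow> nat \<Rightarrow> real" where
  "agent_KL \<theta> \<theta>s j = KL (S j) (\<lambda>w. L j w \<theta>s) (\<lambda>w. L j w \<theta>)"

definition expected_log_ratio :: "'h \<Rightarrow> 'h \<Rightarrow> nat \<Rightarrow> nat \<Rightarrow> nat \<Rightarrow> real" where
  "expected_log_ratio \<theta> \<theta>s t s j = expect_star n S L \<theta>s t
     (\<lambda>\<omega>. ln (bfl_belief n E \<Theta> L \<omega> s j \<theta> / bfl_belief n E \<Theta> L \<omega> s j \<theta>s))"

lemma agent_KL_nonneg:
  "j \<in> agents n \<Longrightarrow> \<theta> \<in> \<Theta> \<Longrightarrow> \<theta>s \<in> \<Theta> \<Longrightarrow> agent_KL \<theta> \<theta>s j \<ge> 0"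
  unfolding agent_KL_def by (rule KL_nonneg) (use fin_S lik_pos lik_sum in auto)

lemma agent_KL_le_C0:
  assumes "j \<in> agents n" and "\<theta> \<in> \<Theta>" and "\<theta>s \<in> \<Theta>" and "\<theta> \<noteq> \<theta>s"
  shows "agent_KL \<theta> \<theta>s j \<le> C0 n S L \<Theta>"
proof -
  let ?A = "{ln (L i w \<theta>1 / L i w \<theta>2) | i w \<theta>1 \<theta>2.
              i \<in> agents n \<and> \<theta>1 \<in> \<Theta> \<and> \<theta>2 \<in> \<Theta> \<and> \<theta>1 \<noteq> \<theta>2 \<and> w \<in> S i}"
  have "?A \<subseteq> (\<lambda>(i, w, \<theta>1, \<theta>2). ln (L i w \<theta>1 / L i w \<theta>2)) ` (SIGMA i:agents n. S i \<times> \<Theta> \<times> \<Theta>)"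
    by force
  moreover have "finite (SIGMA i:agents n. S i \<times> \<Theta> \<times> \<Theta>)"
    using fin_S fin_Theta by (intro finite_SigmaI) auto
  ultimately have fin: "finite ?A"
    by (meson finite_imageI finite_subset)
  have "L j w \<theta>s * ln (L j w \<theta>s / L j w \<theta>) \<le> L j w \<theta>s * C0 n S L \<Theta>" if w: "w \<in> S j" for w
  proof -
    have pos: "L j w \<theta> > 0" "L j w \<theta>s > 0"
      using lik_pos assms w by auto
    have "Min ?A \<le> ln (L j w \<theta> / L j w \<theta>s)"
      using fin assms w by (intro Min_le) blast+
    then have "ln (L j w \<theta>s / L j w \<theta>) \<le> C0 n S L \<Theta>"
      using pos by (simp add: C0_def ln_div)
    then show ?thesis
      using pos by (intro mult_left_mono) auto
  qed
  then have "agent_KL \<theta> \<theta>s j \<le> (\<Sum>w\<in>S j. L j w \<theta>s * C0 n S L \<Theta>)"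
    unfolding agent_KL_def KL_def by (rule sum_mono)
  also have "\<dots> = C0 n S L \<Theta>"
    using lik_sum assms by (simp add: sum_distrib_right[symmetric])
  finally show ?thesis .
qed

lemma C0_nonneg:
  assumes "i \<in> agents n" and "\<theta> \<in> \<Theta>" and "\<theta>s \<in> \<Theta>" and "\<theta> \<noteq> \<theta>s"
  shows "C0 n S L \<Theta> \<ge> 0"
  using agent_KL_nonneg[OF assms(1-3)] agent_KL_le_C0[OF assms] by linarith

lemma C1_nonneg_le_sum_agent_KL:
  assumes "\<theta> \<in> \<Theta>" and "\<theta>s \<in> \<Theta>" and "\<theta> \<noteq> \<theta>s"
  shows "C1 n S L \<Theta> \<ge> 0"
    and "C1 n S L \<Theta> \<le> (\<Sum>j\<in>agents n. agent_KL \<theta> \<theta>s j)"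
proof -
  let ?A = "{(\<Sum>i\<in>agents n. KL (S i) (\<lambda>w. L i w \<theta>') (\<lambda>w. L i w \<theta>)) | \<theta> \<theta>'.
              \<theta> \<in> \<Theta> \<and> \<theta>' \<in> \<Theta> \<and> \<theta> \<noteq> \<theta>'}"
  have "?A \<subseteq> (\<lambda>(\<theta>, \<theta>'). \<Sum>i\<in>agents n. KL (S i) (\<lambda>w. L i w \<theta>') (\<lambda>w. L i w \<theta>)) ` (\<Theta> \<times> \<Theta>)"
    by force
  then have fin: "finite ?A"
    using fin_Theta by (meson finite_SigmaI finite_imageI finite_subset)
  have mem: "(\<Sum>j\<in>agents n. agent_KL \<theta> \<theta>s j) \<in> ?A"
    unfolding agent_KL_def using assms by blast
  show "C1 n S L \<Theta> \<le> (\<Sum>j\<in>agents n. agent_KL \<theta> \<theta>s j)"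
    unfolding C1_def using fin mem by (rule Min_le)
  obtain \<eta> \<eta>' where "\<eta> \<in> \<Theta>" "\<eta>' \<in> \<Theta>"
    and "C1 n S L \<Theta> = (\<Sum>j\<in>agents n. agent_KL \<eta> \<eta>' j)"
    using Min_in[OF fin] mem unfolding C1_def agent_KL_def by blast
  then show "C1 n S L \<Theta> \<ge> 0"
    by (simp add: sum_nonneg agent_KL_nonneg)
qed

lemma expected_log_ratio_0: "expected_log_ratio \<theta> \<theta>s t 0 j = 0"
  by (simp add: expected_log_ratio_def expect_star_def)

lemma expect_star_log_lik_ratio:
  assumes "j \<in> agents n" and "r \<in> {1..t}" and "\<theta> \<in> \<Theta>" and "\<theta>s \<in> \<Theta>"
  shows "expect_star n S L \<theta>s t (\<lambda>\<omega>. ln (L j (\<omega> (j, r)) \<theta> / L j (\<omega> (j, r)) \<theta>s))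
       = - agent_KL \<theta> \<theta>s j"
proof -
  have "expect_star n S L \<theta>s t (\<lambda>\<omega>. ln (L j (\<omega> (j, r)) \<theta> / L j (\<omega> (j, r)) \<theta>s))
      = (\<Sum>w\<in>S j. L j w \<theta>s * ln (L j w \<theta> / L j w \<theta>s))"
    using assms by (intro expect_star_signal) auto
  also have "\<dots> = (\<Sum>w\<in>S j. - (L j w \<theta>s * ln (L j w \<theta>s / L j w \<theta>)))"
    using lik_pos assms by (intro sum.cong) (auto simp: ln_div algebra_simps)
  finally show ?thesis
    by (simp add: agent_KL_def KL_def sum_negf)
qed

lemma expected_log_ratio_Suc:
  assumes "\<theta> \<in> \<Theta>" and "\<theta>s \<in> \<Theta>" and "s < t" and j: "j \<in> agents n"
  shows "expected_log_ratio \<theta> \<theta>s t (Suc s) j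
       = (\<Sum>l\<in>agents n. bfl_weight n E j l * expected_log_ratio \<theta> \<theta>s t s l)
         - real (Suc s) * agent_KL \<theta> \<theta>s j"
proof -
  have "expected_log_ratio \<theta> \<theta>s t (Suc s) j = expect_star n S L \<theta>s t (\<lambda>\<omega>.
          (\<Sum>r\<in>{1..Suc s}. ln (L j (\<omega> (j, r)) \<theta> / L j (\<omega> (j, r)) \<theta>s))
        + (\<Sum>l\<in>agents n. bfl_weight n E j l *
             ln (bfl_belief n E \<Theta> L \<omega> s l \<theta> / bfl_belief n E \<Theta> L \<omega> s l \<theta>s)))"
    unfolding expected_log_ratio_def
    by (rule expect_star_cong, rule bfl_log_ratio_Suc) (use assms in auto)
  also have "\<dots> = (\<Sum>r\<in>{1..Suc s}. - agent_KL \<theta> \<theta>s j)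
      + (\<Sum>l\<in>agents n. bfl_weight n E j l * expected_log_ratio \<theta> \<theta>s t s l)"
    unfolding expect_star_add expect_star_sum expect_star_cmult expected_log_ratio_def
    using expect_star_log_lik_ratio assms by simp
  finally show ?thesis
    by simp
qed

lemma expected_log_ratio_eq:
  assumes "\<theta> \<in> \<Theta>" and "\<theta>s \<in> \<Theta>" and "s \<le> t" and "j \<in> agents n"
  shows "expected_log_ratio \<theta> \<theta>s t s j = - (\<Sum>k<s. (real s - real k) *
           (\<Sum>m\<in>agents n. mat_pow (agents n) (bfl_weight n E) k j m * agent_KL \<theta> \<theta>s m))"
  by (rule linear_recursion_closed_form[where e = "expected_log_ratio \<theta> \<theta>s t" and t = t])
    (simp_all add: expected_log_ratio_0 expected_log_ratio_Suc assms)

lemma expected_log_ratio_le_quadratic: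
  assumes "E \<subseteq> agents n \<times> agents n" and "strongly_connected n E"
    and \<theta>: "\<theta> \<in> \<Theta>" and \<theta>s: "\<theta>s \<in> \<Theta>" and "\<theta> \<noteq> \<theta>s" and i: "i \<in> agents n"
  shows "expected_log_ratio \<theta> \<theta>s t t i
       \<le> - ((1 / real n) ^ n * C1 n S L \<Theta> / 2) * ((real t)\<^sup>2 - (2 * real n - 1) * real t)"
proof -
  define c where "c = (1 / real n) ^ n"
  define f where "f k = (\<Sum>m\<in>agents n. mat_pow (agents n) (bfl_weight n E) k i m * agent_KL \<theta> \<theta>s m)"
    for k
  have c_nonneg: "c \<ge> 0"
    by (simp add: c_def)
  have f_nonneg: "f k \<ge> 0" for k
    unfolding f_def using \<theta> \<theta>s
    by (intro sum_nonneg mult_nonneg_nonneg mat_pow_nonneg bfl_weight_nonneg agent_KL_nonneg)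
  have f_ge: "c * C1 n S L \<Theta> \<le> f k" if "n \<le> k" for k
  proof -
    have "c * C1 n S L \<Theta> \<le> (\<Sum>m\<in>agents n. c * agent_KL \<theta> \<theta>s m)"
      using C1_nonneg_le_sum_agent_KL(2)[OF assms(3-5)] c_nonneg
      by (simp add: sum_distrib_left[symmetric] mult_left_mono)
    also have "\<dots> \<le> f k"
      unfolding f_def c_def using assms that
      by (intro sum_mono mult_right_mono mat_pow_bfl_weight_ge agent_KL_nonneg) auto
    finally show ?thesis .
  qed
  have "c * C1 n S L \<Theta> * (\<Sum>k\<in>{n..<t}. real t - real k)
      = (\<Sum>k\<in>{n..<t}. (real t - real k) * (c * C1 n S L \<Theta>))"
    by (simp add: sum_distrib_left mult.commute)
  also have "\<dots> \<le> (\<Sum>k\<in>{n..<t}. (real t - real k) * f k)"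
    using f_ge by (intro sum_mono mult_left_mono) auto
  also have "\<dots> \<le> (\<Sum>k<t. (real t - real k) * f k)"
    using f_nonneg by (intro sum_mono2) auto
  finally have "expected_log_ratio \<theta> \<theta>s t t i \<le> - (c * C1 n S L \<Theta> * (\<Sum>k\<in>{n..<t}. real t - real k))"
    using expected_log_ratio_eq[OF \<theta> \<theta>s order.refl i] by (simp add: f_def)
  moreover have "c * C1 n S L \<Theta> * ((real t)\<^sup>2 - (2 * real n - 1) * real t)
      \<le> c * C1 n S L \<Theta> * (2 * (\<Sum>k\<in>{n..<t}. real t - real k))"
    using c_nonneg C1_nonneg_le_sum_agent_KL(1)[OF assms(3-5)]
    by (intro mult_left_mono sum_atLeastLessThan_diff_ge) auto
  ultimately show ?thesis
    by (simp add: c_def)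
qed

lemma expected_log_ratio_le:
  assumes "E \<subseteq> agents n \<times> agents n" and "strongly_connected n E"
    and "\<theta> \<in> \<Theta>" and "\<theta>s \<in> \<Theta>" and "\<theta> \<noteq> \<theta>s" and i: "i \<in> agents n"
  shows "expected_log_ratio \<theta> \<theta>s t t i
       \<le> real n * C0 n S L \<Theta> * real t - C1 n S L \<Theta> / (2 * real n ^ n) * (real t)\<^sup>2"
proof -
  define c where "c = (1 / real n) ^ n"
  have n: "n \<ge> 1"
    using i by (simp add: agents_def)
  have C0: "C0 n S L \<Theta> \<ge> 0"
    using C0_nonneg[OF i assms(3-5)] .
  have C1_le: "C1 n S L \<Theta> \<le> real n * C0 n S L \<Theta>"
    using C1_nonneg_le_sum_agent_KL(2)[OF assms(3-5)] agent_KL_le_C0[OF _ assms(3-5)]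
      sum_mono[of "agents n" "agent_KL \<theta> \<theta>s" "\<lambda>_. C0 n S L \<Theta>"] by simp
  have "c * real n \<le> 1"
    using power_decreasing[of 1 n "1 / real n"] n by (simp add: c_def field_simps)
  have "c * C1 n S L \<Theta> \<le> c * (real n * C0 n S L \<Theta>)"
    using C1_le by (rule mult_left_mono) (simp add: c_def)
  also have "\<dots> \<le> 1 * C0 n S L \<Theta>"
    unfolding mult.assoc[symmetric] using \<open>c * real n \<le> 1\<close> C0 by (rule mult_right_mono)
  finally have "c * C1 n S L \<Theta> * (2 * real n - 1) \<le> C0 n S L \<Theta> * (2 * real n - 1)"
    using n by (intro mult_right_mono) auto
  also have "\<dots> \<le> 2 * real n * C0 n S L \<Theta>"
    using C0 by (simp add: algebra_simps)
  finally have "c * C1 n S L \<Theta> * (2 * real n - 1) * real t \<le> 2 * real n * C0 n S L \<Theta> * real t"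
    by (rule mult_right_mono) simp
  moreover have "C1 n S L \<Theta> / (2 * real n ^ n) * (real t)\<^sup>2 = c * C1 n S L \<Theta> / 2 * (real t)\<^sup>2"
    by (simp add: c_def power_one_over)
  moreover have "- (c * C1 n S L \<Theta> / 2) * ((real t)\<^sup>2 - (2 * real n - 1) * real t)
      = c * C1 n S L \<Theta> * (2 * real n - 1) * real t / 2 - c * C1 n S L \<Theta> / 2 * (real t)\<^sup>2"
    by (simp add: algebra_simps)
  ultimately show ?thesis
    using expected_log_ratio_le_quadratic[OF assms, where t = t] unfolding c_def[symmetric]
    by linarith
qed

end

lemma one_minus_mult_one_minus_powr_bounds:
  fixes c p :: real
  assumes "0 < c" and "c < 1" and "0 < p"
  shows "0 < (1 - c) * (1 - (1 - c) powr p)" and "(1 - c) * (1 - (1 - c) powr p) \<le> 1"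
proof -
  have "(1 - c) powr p < 1"
    using powr_less_mono2[of p "1 - c" 1] assms by simp
  moreover have "(1 - c) powr p \<ge> 0"
    by simp
  ultimately show "0 < (1 - c) * (1 - (1 - c) powr p)" and "(1 - c) * (1 - (1 - c) powr p) \<le> 1"
    using assms by (auto intro: mult_le_one)
qed

theorem lemma4:
  fixes n :: nat and E :: "(nat \<times> nat) set" and \<Theta> :: "'h set"
    and S :: "nat \<Rightarrow> 's set" and L :: "nat \<Rightarrow> 's \<Rightarrow> 'h \<Rightarrow> real"
    and \<theta> \<theta>s :: 'h and i t :: nat
  assumes n2: "n \<ge> 2"
    and E_sub: "E \<subseteq> agents n \<times> agents n"
    and sc: "strongly_connected n E"
    and fin_Theta: "finite \<Theta>"
    and fin_S: "\<forall>j\<in>agents n. finite (S j)"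
    and lik_pos: "\<forall>j\<in>agents n. \<forall>w\<in>S j. \<forall>\<eta>\<in>\<Theta>. L j w \<eta> > 0"
    and lik_sum: "\<forall>j\<in>agents n. \<forall>\<eta>\<in>\<Theta>. (\<Sum>w\<in>S j. L j w \<eta>) = 1"
    and th: "\<theta> \<in> \<Theta>" and ths: "\<theta>s \<in> \<Theta>" and neq: "\<theta> \<noteq> \<theta>s"
    and i: "i \<in> agents n" and t: "t \<ge> 1"
  shows "expect_star n S L \<theta>s t
           (\<lambda>\<omega>. ln (bfl_belief n E \<Theta> L \<omega> t i \<theta> / bfl_belief n E \<Theta> L \<omega> t i \<theta>s))
         \<le> (let lam = (1 - (1 / real n) ^ n) powr (1 / real n)
            in real n * C0 n S L \<Theta> / ((1 - 1 / real n ^ n) * (1 - lam)) * real t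
               - C1 n S L \<Theta> / (2 * real n ^ n) * (real t)\<^sup>2)"
proof -
  interpret bfl_model n E \<Theta> S L
    using fin_Theta fin_S lik_pos lik_sum by unfold_locales
  \<comment> \<open>The paper's mixing factor X is at most 1, so expected_log_ratio_le is the sharper
    bound.\<close>
  define X where "X = (1 - (1 / real n) ^ n) * (1 - (1 - (1 / real n) ^ n) powr (1 / real n))"
  have "(1 / real n) ^ n < 1"
    using n2 by (simp add: power_less_one_iff)
  then have "0 < X" and "X \<le> 1"
    unfolding X_def using n2 by (auto intro!: one_minus_mult_one_minus_powr_bounds)
  then have "real n * C0 n S L \<Theta> * real t \<le> real n * C0 n S L \<Theta> / X * real t"
    using C0_nonneg[OF i th ths neq] by (intro mult_right_mono) (auto simp: le_divide_eq mult_left_le)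
  then show ?thesis
    using expected_log_ratio_le[OF E_sub sc th ths neq i, where t = t]
    by (simp add: expected_log_ratio_def X_def Let_def power_one_over)
qed

end
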